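(* Let $W:\mathcal{X}\to\mathcal{Y}$ be a channel with $\mathcal{Y}$ finite, $n\in\mathbb{N}$, $0<\delta\le\sqrt{n}\log|\mathcal{Y}|$, and let $u_1,\dots,u_N\in\mathcal{X}^n$ satisfy $1-\frac12\|W_{u_j}-W_{u_k}\|_1\le 2^{-3\delta\sqrt{n}}$ for all $j\ne k$. Then there is a subset $\mathcal{C}\subset[N]$ with $|\mathcal{C}|\ge N/\lceil n\log|\mathcal{Y}|\rceil$ such that $\{(u_j,\mathcal{E}_j=\mathcal{T}^\delta_{u_j}):j\in\mathcal{C}\}$ is an $(n,|\mathcal{C}|,\lambda_1,\lambda_2)$-DI code with \[ \lambda_1=2\exp\!\left(-\delta^2/36K(|\mathcal{Y}|)\right),\qquad \lambda_2=2\exp\!\left(-\delta^2/36K(|\mathcal{Y}|)\right)+3\exp\!\left(-\delta\sqrt{n}\right). \]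
   Context: A channel $W:\mathcal{X}\to\mathcal{Y}$ ($\mathcal{X}$ a measurable space) is a measurable map $x\mapsto W_x\in\mathcal{P}(\mathcal{Y})$; $W_{x^n}(y^n)=\prod_{i=1}^nW_{x_i}(y_i)$. Logarithms and exponentials are base 2. $\|P-Q\|_1=\sum_y|P(y)-Q(y)|$; $H$ is Shannon entropy. The conditional typical set is $\mathcal{T}^\delta_{x^n}=\{y^n\in\mathcal{Y}^n:|\log W_{x^n}(y^n)+H(W_{x^n})|\le\delta\sqrt{n}\}$ and $K(d)=(\log\max\{d,3\})^2$. An $(n,M,\lambda_1,\lambda_2)$-DI code indexed by a set $\mathcal{C}$ of size $M$ is a family $\{(u_j,\mathcal{E}_j):j\in\mathcal{C}\}$, $u_j\in\mathcal{X}^n$, $\mathcal{E}_j\subset\mathcal{Y}^n$, with $W_{u_j}(\mathcal{E}_j)\ge1-\lambda_1$ for all $j$ and $W_{u_j}(\mathcal{E}_k)\le\lambda_2$ for all $j\ne k$. *)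

theory Defs
  imports Complex_Main "HOL-Library.FuncSet"
begin

definition channel :: "('x \<Rightarrow> 'y::finite \<Rightarrow> real) \<Rightarrow> bool" where
  "channel W \<longleftrightarrow> (\<forall>x. (\<forall>y. W x y \<ge> 0) \<and> (\<Sum>y\<in>UNIV. W x y) = 1)"

definition words :: "nat \<Rightarrow> (nat \<Rightarrow> 'y::finite) set" where
  "words n = PiE {..<n} (\<lambda>_. UNIV)"

definition Wn :: "('x \<Rightarrow> 'y \<Rightarrow> real) \<Rightarrow> nat \<Rightarrow> (nat \<Rightarrow> 'x) \<Rightarrow> (nat \<Rightarrow> 'y) \<Rightarrow> real" where
  "Wn W n x ys = (\<Prod>i<n. W (x i) (ys i))"

definition WP :: "('x \<Rightarrow> 'y::finite \<Rightarrow> real) \<Rightarrow> nat \<Rightarrow> (nat \<Rightarrow> 'x) \<Rightarrow> (nat \<Rightarrow> 'y) set \<Rightarrow> real" where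
  "WP W n x E = (\<Sum>ys\<in>E \<inter> words n. Wn W n x ys)"

definition Hn :: "('x \<Rightarrow> 'y::finite \<Rightarrow> real) \<Rightarrow> nat \<Rightarrow> (nat \<Rightarrow> 'x) \<Rightarrow> real" where
  "Hn W n x = - (\<Sum>ys\<in>words n. if Wn W n x ys = 0 then 0
                                  else Wn W n x ys * log 2 (Wn W n x ys))"

definition L1n :: "('x \<Rightarrow> 'y::finite \<Rightarrow> real) \<Rightarrow> nat \<Rightarrow> (nat \<Rightarrow> 'x) \<Rightarrow> (nat \<Rightarrow> 'x) \<Rightarrow> real" where
  "L1n W n x x' = (\<Sum>ys\<in>words n. \<bar>Wn W n x ys - Wn W n x' ys\<bar>)"

text \<open>Conditional typical set; words of probability 0 have log = -infinity and
  are therefore excluded.\<close>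
definition typical :: "('x \<Rightarrow> 'y::finite \<Rightarrow> real) \<Rightarrow> nat \<Rightarrow> real \<Rightarrow> (nat \<Rightarrow> 'x) \<Rightarrow> (nat \<Rightarrow> 'y) set" where
  "typical W n \<delta> x = {ys \<in> words n. Wn W n x ys > 0 \<and>
      \<bar>log 2 (Wn W n x ys) + Hn W n x\<bar> \<le> \<delta> * sqrt (real n)}"

definition K :: "real \<Rightarrow> real" where
  "K d = (log 2 (max d 3))^2"

definition DI_code :: "('x \<Rightarrow> 'y::finite \<Rightarrow> real) \<Rightarrow> nat \<Rightarrow> 'i set \<Rightarrow> ('i \<Rightarrow> nat \<Rightarrow> 'x)
      \<Rightarrow> ('i \<Rightarrow> (nat \<Rightarrow> 'y) set) \<Rightarrow> real \<Rightarrow> real \<Rightarrow> bool" where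
  "DI_code W n C u E l1 l2 \<longleftrightarrow>
     (\<forall>j\<in>C. E j \<subseteq> words n \<and> WP W n (u j) (E j) \<ge> 1 - l1) \<and>
     (\<forall>j\<in>C. \<forall>k\<in>C. j \<noteq> k \<longrightarrow> WP W n (u j) (E k) \<le> l2)"

end

theory Submission
  imports Defs
begin

text \<open>In nats, the surprisal -ln W_u(y^n) of an output word is a sum of n independent
  letter surprisals, and with L = ln max |Y| 3 each of them satisfies
  E exp(s (X - H)) \<le> exp(12 s^2 L^2) for |s| \<le> 1/(24 L). A Chernoff bound then gives
  W_u(T_u) \<ge> 1 - \<lambda>1 for every codeword u. If the entropies of u and u' differ by at most
  one bit, then W_u \<le> 2^(1 + 2 \<delta> sqrt n) min(W_u, W_u') on T_u \<inter> T_u', while the total mass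
  of min(W_u, W_u') is 1 - |W_u - W_u'|/2 \<le> 2^(-3 \<delta> sqrt n); hence
  W_u(T_u') \<le> \<lambda>1 + 2 2^(-\<delta> sqrt n). Finally, all entropies lie in [0, n log |Y|], so one of
  \<lceil>n log |Y|\<rceil> unit intervals contains the entropies of at least N / \<lceil>n log |Y|\<rceil> codewords.\<close>

section \<open>Entropy of a distribution on a finite set\<close>

definition is_distribution :: "('y::finite \<Rightarrow> real) \<Rightarrow> bool" where
  "is_distribution p \<longleftrightarrow> (\<forall>y. p y \<ge> 0) \<and> sum p UNIV = 1"

definition surprisal :: "('y \<Rightarrow> real) \<Rightarrow> 'y \<Rightarrow> real" where
  "surprisal p y = (if p y = 0 then 0 else - ln (p y))"

definition entropy :: "('y::finite \<Rightarrow> real) \<Rightarrow> real" where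
  "entropy p = (\<Sum>y\<in>UNIV. p y * surprisal p y)"

lemma is_distribution_le_1: "is_distribution p \<Longrightarrow> p y \<le> 1"
  unfolding is_distribution_def by (metis finite UNIV_I member_le_sum)

lemma is_distribution_pos: "is_distribution p \<Longrightarrow> p y \<noteq> 0 \<Longrightarrow> p y > 0"
  unfolding is_distribution_def by (metis less_eq_real_def)

lemma surprisal_nonneg:
  assumes "is_distribution p"
  shows "surprisal p y \<ge> 0"
proof (cases "p y = 0")
  case False
  then have "0 < p y" "p y \<le> 1"
    using assms by (auto intro: is_distribution_pos is_distribution_le_1)
  then show ?thesis using False unfolding surprisal_def by simp
qed (simp add: surprisal_def)

lemma entropy_nonneg: "is_distribution p \<Longrightarrow> entropy p \<ge> 0"
  unfolding entropy_def
  by (intro sum_nonneg mult_nonneg_nonneg) (auto intro: surprisal_nonneg simp: is_distribution_def)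

lemma entropy_le_ln_card:
  fixes p :: "'y::finite \<Rightarrow> real"
  assumes p: "is_distribution p"
  shows "entropy p \<le> ln (real (card (UNIV :: 'y set)))"
proof -
  define c where "c = real (card (UNIV :: 'y set))"
  have c: "c > 0" unfolding c_def by (simp add: card_gt_0_iff)
  have pointwise: "p y * (surprisal p y - ln c) \<le> 1 / c - p y" for y
  proof (cases "p y = 0")
    case True
    then show ?thesis using c by simp
  next
    case False
    then have py: "p y > 0" using p by (rule is_distribution_pos[rotated])
    have "p y * (surprisal p y - ln c) = p y * ln (1 / (p y * c))"
      using py c False by (simp add: surprisal_def ln_div ln_mult)
    also have "\<dots> \<le> p y * (1 / (p y * c) - 1)"
      using py c by (intro mult_left_mono ln_le_minus_one) auto
    also have "\<dots> = 1 / c - p y" using py c by (simp add: field_simps)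
    finally show ?thesis .
  qed
  have "entropy p - ln c = (\<Sum>y\<in>UNIV. p y * (surprisal p y - ln c))"
    using p unfolding entropy_def is_distribution_def
    by (simp add: right_diff_distrib sum_subtractf sum_distrib_right[symmetric])
  also have "\<dots> \<le> (\<Sum>y\<in>UNIV. 1 / c - p y)"
    by (intro sum_mono pointwise)
  also have "\<dots> = 0" using p c unfolding is_distribution_def c_def by (simp add: sum_subtractf)
  finally show ?thesis unfolding c_def by simp
qed

section \<open>Exponential moments of the surprisal\<close>

lemma exp_le_taylor_2: "exp (u::real) \<le> 1 + u + u\<^sup>2 / 2 * exp \<bar>u\<bar>"
proof -
  obtain t where t: "\<bar>t\<bar> \<le> \<bar>u\<bar>" "exp u = (\<Sum>m<2. u ^ m / fact m) + exp t / fact 2 * u ^ 2"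
    using Maclaurin_exp_le[of u 2] by blast
  have "exp t / 2 * u\<^sup>2 \<le> exp \<bar>u\<bar> / 2 * u\<^sup>2"
    using t(1) by (intro mult_right_mono) auto
  moreover have "exp u = 1 + u + exp t / 2 * u\<^sup>2" using t(2) by (simp add: numeral_2_eq_2)
  ultimately show ?thesis by (simp add: mult.commute)
qed

lemma exp_neg_mult_sq_le:
  fixes x d :: real
  assumes x: "0 \<le> x" "2 * ln d \<le> x" and d: "0 < d"
  shows "exp (- x) * x\<^sup>2 * exp (x / 24) \<le> 5 / d"
proof -
  have "x / 5 \<le> exp (x / 5 - 1)" using exp_ge_add_one_self[of "x/5 - 1"] by simp
  then have "(x / 5)\<^sup>2 \<le> (exp (x / 5 - 1))\<^sup>2" using x by (intro power_mono) auto
  also have "\<dots> = exp (2/5 * x) / exp 2"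
    by (simp add: power2_eq_square exp_add[symmetric] exp_diff[symmetric] algebra_simps)
  also have "\<dots> \<le> exp (2/5 * x) / 5"
    using exp_lower_Taylor_quadratic[of "2::real"] by (intro divide_left_mono) auto
  finally have sq: "x\<^sup>2 \<le> 5 * exp (2/5 * x)" by (simp add: power_divide)
  have "d \<le> exp (x / 2)" using x exp_ln[OF d] exp_le_cancel_iff[of "ln d" "x / 2"] by linarith
  then have "exp (- x / 2) \<le> 1 / d" using d by (simp add: exp_minus field_simps)
  have "exp (- x) * exp (x / 24) \<le> exp (- x / 2) * exp (- (2/5) * x)"
    unfolding exp_add[symmetric] using x by simp
  also have "\<dots> \<le> 1 / d * exp (- (2/5) * x)"
    using \<open>exp (- x / 2) \<le> 1 / d\<close> by (intro mult_right_mono) auto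
  finally have "exp (- x) * x\<^sup>2 * exp (x / 24) \<le> x\<^sup>2 * (1 / d * exp (- (2/5) * x))"
    using mult_left_mono[of _ _ "x\<^sup>2"] by (fastforce simp: ac_simps)
  also have "\<dots> \<le> 5 * exp (2/5 * x) * (1 / d * exp (- (2/5) * x))"
    using sq d by (intro mult_right_mono) auto
  also have "\<dots> = 5 / d" by (simp add: exp_minus field_simps)
  finally show ?thesis .
qed

text \<open>Either -ln p \<le> 2 ln d, and then the deviation is at most 2L and the exponential
  at most exp(1/12) \<le> 2; or p < 1/d^2 is so small that the factor p absorbs
  the quadratic and exponential growth in -ln p.\<close>

lemma sq_deviation_exp_le:
  fixes p h d L s :: real
  assumes p: "0 < p" "p \<le> 1" and h: "0 \<le> h" "h \<le> ln d" and d: "1 \<le> d" "ln d \<le> L"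
    and L: "1 \<le> L" and s: "\<bar>s\<bar> \<le> 1 / (24 * L)"
  shows "p * (- ln p - h)\<^sup>2 * exp \<bar>s * (- ln p - h)\<bar> \<le> 8 * p * L\<^sup>2 + 5 / d"
proof -
  define x where "x = - ln p"
  have x0: "x \<ge> 0" using p unfolding x_def by simp
  have ld: "ln d \<ge> 0" using d by simp
  show ?thesis
  proof (cases "x \<le> 2 * ln d")
    case True
    have dev: "\<bar>x - h\<bar> \<le> 2 * L" using True h x0 ld d by (auto simp: abs_if)
    then have dev2: "(x - h)\<^sup>2 \<le> 4 * L\<^sup>2"
      using power_mono[of "\<bar>x - h\<bar>" "2 * L" 2] by (simp add: power_mult_distrib)
    have "\<bar>s * (x - h)\<bar> \<le> 1 / (24 * L) * (2 * L)"
      unfolding abs_mult using s dev by (intro mult_mono) auto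
    also have "\<dots> = 1/12" using L by (simp add: field_simps)
    finally have "exp \<bar>s * (x - h)\<bar> \<le> exp (1/12)" by simp
    also have "exp (1/12 :: real) \<le> 2"
      using exp_bound[of "1/12::real"] by (simp add: power2_eq_square)
    finally have "p * (x - h)\<^sup>2 * exp \<bar>s * (x - h)\<bar> \<le> p * (4 * L\<^sup>2) * 2"
      using p dev2 by (intro mult_mono) auto
    also have "\<dots> \<le> 8 * p * L\<^sup>2 + 5 / d" using d by simp
    finally show ?thesis unfolding x_def by simp
  next
    case False
    have dev: "0 \<le> x - h" "x - h \<le> x" using False h ld by auto
    have "\<bar>s\<bar> \<le> 1/24"
      using order_trans[OF s divide_left_mono[of 24 "24 * L" 1]] L by auto
    then have "\<bar>s\<bar> * \<bar>x - h\<bar> \<le> 1/24 * x"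
      using dev by (intro mult_mono) auto
    then have "\<bar>s * (x - h)\<bar> \<le> x / 24" by (simp add: abs_mult)
    moreover have "p = exp (- x)" using p unfolding x_def by simp
    ultimately have "p * (x - h)\<^sup>2 * exp \<bar>s * (x - h)\<bar> \<le> exp (- x) * x\<^sup>2 * exp (x / 24)"
      using dev by (simp only:) (intro mult_mono power_mono; simp)
    also have "\<dots> \<le> 5 / d" using False x0 d by (intro exp_neg_mult_sq_le) auto
    also have "\<dots> \<le> 8 * p * L\<^sup>2 + 5 / d" using p by simp
    finally show ?thesis unfolding x_def .
  qed
qed

lemma mult_exp_deviation_le:
  fixes p h d L s :: real
  assumes p: "0 < p" "p \<le> 1" and h: "0 \<le> h" "h \<le> ln d" and d: "1 \<le> d" "ln d \<le> L"
    and L: "1 \<le> L" and s: "\<bar>s\<bar> \<le> 1 / (24 * L)"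
  shows "p * exp (s * (- ln p - h)) \<le> p * (1 + s * (- ln p - h)) + s\<^sup>2 / 2 * (8 * p * L\<^sup>2 + 5 / d)"
proof -
  define u where "u = s * (- ln p - h)"
  have "p * exp u \<le> p * (1 + u + u\<^sup>2 / 2 * exp \<bar>u\<bar>)"
    using p exp_le_taylor_2[of u] by (intro mult_left_mono) auto
  also have "\<dots> = p * (1 + u) + s\<^sup>2 / 2 * (p * (- ln p - h)\<^sup>2 * exp \<bar>u\<bar>)"
    unfolding u_def by (simp add: power2_eq_square algebra_simps)
  also have "\<dots> \<le> p * (1 + u) + s\<^sup>2 / 2 * (8 * p * L\<^sup>2 + 5 / d)"
    using sq_deviation_exp_le[OF assms] unfolding u_def by (intro add_left_mono mult_left_mono) auto
  finally show ?thesis unfolding u_def .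
qed

lemma surprisal_mgf_le:
  fixes p :: "'y::finite \<Rightarrow> real"
  assumes p: "is_distribution p" and L: "1 \<le> L" "ln (real (card (UNIV :: 'y set))) \<le> L"
    and s: "\<bar>s\<bar> \<le> 1 / (24 * L)"
  shows "(\<Sum>y\<in>UNIV. p y * exp (s * (surprisal p y - entropy p))) \<le> exp (12 * s\<^sup>2 * L\<^sup>2)"
proof -
  define d where "d = real (card (UNIV :: 'y set))"
  define h where "h = entropy p"
  have d1: "1 \<le> d" unfolding d_def by (simp add: Suc_le_eq card_gt_0_iff)
  have h: "0 \<le> h" "h \<le> ln d"
    using entropy_nonneg[OF p] entropy_le_ln_card[OF p] unfolding h_def d_def by auto
  have pointwise: "p y * exp (s * (surprisal p y - h))
      \<le> p y * (1 + s * (surprisal p y - h)) + s\<^sup>2 / 2 * (8 * p y * L\<^sup>2 + 5 / d)" for y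
  proof (cases "p y = 0")
    case True
    then show ?thesis using d1 by simp
  next
    case False
    then show ?thesis
      using mult_exp_deviation_le[OF is_distribution_pos[OF p False] is_distribution_le_1[OF p] h d1 _ L(1) s] L(2)
      unfolding surprisal_def d_def by simp
  qed
  have "(\<Sum>y\<in>UNIV. p y * exp (s * (surprisal p y - h)))
      \<le> (\<Sum>y\<in>UNIV. p y * (1 + s * (surprisal p y - h)) + s\<^sup>2 / 2 * (8 * p y * L\<^sup>2 + 5 / d))"
    by (intro sum_mono pointwise)
  also have "\<dots> = (\<Sum>y\<in>UNIV. p y) + s * ((\<Sum>y\<in>UNIV. p y * surprisal p y) - h * (\<Sum>y\<in>UNIV. p y))
      + s\<^sup>2 / 2 * (8 * (\<Sum>y\<in>UNIV. p y) * L\<^sup>2 + real (card (UNIV :: 'y set)) * (5 / d))"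
    by (simp add: sum.distrib sum_distrib_left sum_distrib_right sum_subtractf algebra_simps)
  also have "\<dots> = 1 + s\<^sup>2 / 2 * (8 * L\<^sup>2 + 5)"
    using p d1 unfolding is_distribution_def h_def entropy_def d_def by simp
  also have "\<dots> \<le> 1 + 12 * s\<^sup>2 * L\<^sup>2"
  proof -
    have "1 \<le> L\<^sup>2" using L by (simp add: one_le_power)
    then have "s\<^sup>2 / 2 * (8 * L\<^sup>2 + 5) \<le> s\<^sup>2 / 2 * (24 * L\<^sup>2)"
      by (intro mult_left_mono) auto
    then show ?thesis by (simp add: ac_simps)
  qed
  also have "\<dots> \<le> exp (12 * s\<^sup>2 * L\<^sup>2)" by (rule exp_ge_add_one_self)
  finally show ?thesis unfolding h_def .
qed

section \<open>Product channels\<close>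

lemma channel_is_distribution: "channel W \<Longrightarrow> is_distribution (W x)"
  unfolding channel_def is_distribution_def by auto

lemma finite_words: "finite (words n)"
  unfolding words_def by (simp add: finite_PiE)

lemma Wn_nonneg: "channel W \<Longrightarrow> Wn W n x ys \<ge> 0"
  unfolding channel_def Wn_def by (simp add: prod_nonneg)

lemma sum_Wn_mult_prod:
  "(\<Sum>ys\<in>words n. Wn W n x ys * (\<Prod>i<n. f i (ys i))) = (\<Prod>i<n. \<Sum>y\<in>UNIV. W (x i) y * f i y)"
proof -
  have "(\<Prod>i<n. \<Sum>y\<in>UNIV. W (x i) y * f i y) = (\<Sum>g\<in>words n. \<Prod>i<n. W (x i) (g i) * f i (g i))"
    unfolding words_def by (rule prod_sum_PiE) auto
  then show ?thesis unfolding Wn_def by (simp add: prod.distrib)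
qed

lemma sum_Wn_eq_1: "channel W \<Longrightarrow> (\<Sum>ys\<in>words n. Wn W n x ys) = 1"
  using sum_Wn_mult_prod[of W n x "\<lambda>_ _. 1"] unfolding channel_def by simp

lemma sum_Wn_mult_coordinate:
  assumes "channel W" "i < n"
  shows "(\<Sum>ys\<in>words n. Wn W n x ys * g (ys i)) = (\<Sum>y\<in>UNIV. W (x i) y * g y)"
proof -
  define f where "f j y = (if j = i then g y else 1)" for j y
  have "(\<Sum>ys\<in>words n. Wn W n x ys * g (ys i)) = (\<Sum>ys\<in>words n. Wn W n x ys * (\<Prod>j<n. f j (ys j)))"
    using assms(2) by (simp add: f_def)
  also have "\<dots> = (\<Prod>j<n. \<Sum>y\<in>UNIV. W (x j) y * f j y)"
    by (rule sum_Wn_mult_prod)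
  also have "\<dots> = (\<Prod>j<n. if j = i then (\<Sum>y\<in>UNIV. W (x i) y * g y) else 1)"
    using assms(1) unfolding channel_def f_def by (intro prod.cong) auto
  also have "\<dots> = (\<Sum>y\<in>UNIV. W (x i) y * g y)" using assms(2) by simp
  finally show ?thesis .
qed

lemma WP_eq_1_minus_compl:
  assumes "channel W" "T \<subseteq> words n"
  shows "WP W n x T = 1 - (\<Sum>ys\<in>words n - T. Wn W n x ys)"
proof -
  have "1 = (\<Sum>ys\<in>words n - T. Wn W n x ys) + (\<Sum>ys\<in>T. Wn W n x ys)"
    using sum_Wn_eq_1[OF assms(1), of n x] sum.subset_diff[OF assms(2) finite_words, of "Wn W n x"]
    by linarith
  then show ?thesis unfolding WP_def using assms(2) by (simp add: Int_absorb2)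
qed

definition word_surprisal :: "('x \<Rightarrow> 'y::finite \<Rightarrow> real) \<Rightarrow> nat \<Rightarrow> (nat \<Rightarrow> 'x) \<Rightarrow> (nat \<Rightarrow> 'y) \<Rightarrow> real" where
  "word_surprisal W n x ys = (\<Sum>i<n. surprisal (W (x i)) (ys i))"

definition word_entropy :: "('x \<Rightarrow> 'y::finite \<Rightarrow> real) \<Rightarrow> nat \<Rightarrow> (nat \<Rightarrow> 'x) \<Rightarrow> real" where
  "word_entropy W n x = (\<Sum>i<n. entropy (W (x i)))"

lemma ln_Wn:
  assumes ch: "channel W" and pos: "Wn W n x ys > 0"
  shows "ln (Wn W n x ys) = - word_surprisal W n x ys"
proof -
  have factor_pos: "W (x i) (ys i) > 0" if "i < n" for i
  proof -
    have "W (x i) (ys i) \<noteq> 0"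
      using pos that unfolding Wn_def by (metis finite_lessThan lessThan_iff less_irrefl prod_zero)
    then show ?thesis using is_distribution_pos[OF channel_is_distribution[OF ch]] by blast
  qed
  have "ln (Wn W n x ys) = (\<Sum>i<n. ln (W (x i) (ys i)))"
    unfolding Wn_def using factor_pos by (intro ln_prod) (auto dest: less_imp_neq[symmetric])
  also have "\<dots> = (\<Sum>i<n. - surprisal (W (x i)) (ys i))"
    using factor_pos by (intro sum.cong) (auto simp: surprisal_def)
  finally show ?thesis unfolding word_surprisal_def by (simp add: sum_negf)
qed

lemma Hn_eq_word_entropy:
  assumes ch: "channel W"
  shows "Hn W n x = word_entropy W n x / ln 2"
proof -
  have pointwise: "(if Wn W n x ys = 0 then 0 else Wn W n x ys * log 2 (Wn W n x ys))
      = - (Wn W n x ys * word_surprisal W n x ys) / ln 2" for ys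
  proof (cases "Wn W n x ys = 0")
    case False
    then have "Wn W n x ys > 0" using Wn_nonneg[OF ch, of n x ys] by simp
    then show ?thesis using ln_Wn[OF ch] False by (simp add: log_def)
  qed simp
  have "Hn W n x = (\<Sum>ys\<in>words n. Wn W n x ys * word_surprisal W n x ys) / ln 2"
    unfolding Hn_def pointwise by (simp add: sum_divide_distrib sum_negf)
  also have "(\<Sum>ys\<in>words n. Wn W n x ys * word_surprisal W n x ys)
     = (\<Sum>i<n. \<Sum>ys\<in>words n. Wn W n x ys * surprisal (W (x i)) (ys i))"
    unfolding word_surprisal_def by (simp add: sum_distrib_left sum.swap[of _ "words n"])
  also have "\<dots> = word_entropy W n x"
    unfolding word_entropy_def entropy_def using sum_Wn_mult_coordinate[OF ch] by (intro sum.cong) auto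
  finally show ?thesis .
qed

lemma Hn_nonneg: "channel W \<Longrightarrow> 0 \<le> Hn W n x"
  unfolding Hn_eq_word_entropy word_entropy_def
  by (simp add: sum_nonneg entropy_nonneg channel_is_distribution)

lemma Hn_le:
  fixes W :: "'x \<Rightarrow> 'y::finite \<Rightarrow> real"
  assumes ch: "channel W"
  shows "Hn W n x \<le> real n * log 2 (real (card (UNIV :: 'y set)))"
proof -
  have "word_entropy W n x \<le> (\<Sum>i<n. ln (real (card (UNIV :: 'y set))))"
    unfolding word_entropy_def
    using entropy_le_ln_card[OF channel_is_distribution[OF ch]] by (intro sum_mono) auto
  then show ?thesis unfolding Hn_eq_word_entropy[OF ch] by (simp add: log_def divide_right_mono)
qed

section \<open>Concentration on the typical set\<close>

lemma word_surprisal_mgf_le: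
  fixes W :: "'x \<Rightarrow> 'y::finite \<Rightarrow> real"
  assumes ch: "channel W" and L: "1 \<le> L" "ln (real (card (UNIV :: 'y set))) \<le> L"
    and s: "\<bar>s\<bar> \<le> 1 / (24 * L)"
  shows "(\<Sum>ys\<in>words n. Wn W n x ys * exp (s * (word_surprisal W n x ys - word_entropy W n x)))
    \<le> exp (12 * s\<^sup>2 * L\<^sup>2) ^ n"
proof -
  define M where "M i = (\<Sum>y\<in>UNIV. W (x i) y * exp (s * (surprisal (W (x i)) y - entropy (W (x i)))))"
    for i
  have "exp (s * (word_surprisal W n x ys - word_entropy W n x))
      = (\<Prod>i<n. exp (s * (surprisal (W (x i)) (ys i) - entropy (W (x i)))))" for ys
    unfolding word_surprisal_def word_entropy_def
    by (simp add: exp_sum[symmetric] sum_subtractf sum_distrib_left right_diff_distrib)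
  then have "(\<Sum>ys\<in>words n. Wn W n x ys * exp (s * (word_surprisal W n x ys - word_entropy W n x)))
      = (\<Prod>i<n. M i)"
    unfolding M_def by (simp only:) (rule sum_Wn_mult_prod)
  also have "\<dots> \<le> (\<Prod>i<n. exp (12 * s\<^sup>2 * L\<^sup>2))"
    using surprisal_mgf_le[OF channel_is_distribution[OF ch] L s] ch unfolding M_def channel_def
    by (intro prod_mono) (auto intro: sum_nonneg)
  finally show ?thesis by simp
qed

lemma one_le_exp_weight_of_abs_gt:
  fixes t A D :: real
  assumes "0 \<le> t" "A < \<bar>D\<bar>"
  shows "1 \<le> (exp (t * D) + exp (- t * D)) * exp (- t * A)"
proof -
  have "t * A \<le> t * \<bar>D\<bar>" using assms by (intro mult_left_mono) auto
  then have "1 \<le> exp (t * \<bar>D\<bar>) * exp (- t * A)" by (simp add: exp_add[symmetric])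
  also have "\<dots> \<le> (exp (t * D) + exp (- t * D)) * exp (- t * A)"
    by (intro mult_right_mono) (auto simp: abs_if add_increasing add_increasing2)
  finally show ?thesis .
qed

lemma word_surprisal_tail_le:
  fixes W :: "'x \<Rightarrow> 'y::finite \<Rightarrow> real"
  assumes ch: "channel W" and L: "1 \<le> L" "ln (real (card (UNIV :: 'y set))) \<le> L"
    and A: "0 < A" "A \<le> real n * L"
  shows "(\<Sum>ys\<in>{ys\<in>words n. A < \<bar>word_surprisal W n x ys - word_entropy W n x\<bar>}. Wn W n x ys)
    \<le> 2 * exp (- (A\<^sup>2) / (48 * real n * L\<^sup>2))"
    (is "(\<Sum>ys\<in>?Dev. _) \<le> _")
proof -
  have "0 < real n * L" using A by linarith
  with L have n: "real n > 0" by (simp add: zero_less_mult_iff)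
  \<comment> \<open>t minimises 12 n t^2 L^2 - t A; A \<le> n L makes it admissible for the moment bound.\<close>
  define t where "t = A / (24 * real n * L\<^sup>2)"
  have t0: "t \<ge> 0" unfolding t_def using A n by simp
  have "t \<le> (real n * L) / (24 * real n * L\<^sup>2)"
    unfolding t_def using A n L by (intro divide_right_mono) auto
  also have "\<dots> = 1 / (24 * L)" using n L by (simp add: power2_eq_square field_simps)
  finally have t1: "t \<le> 1 / (24 * L)" .
  define D where "D ys = word_surprisal W n x ys - word_entropy W n x" for ys
  define B where "B ys = (exp (t * D ys) + exp (- t * D ys)) * exp (- t * A)" for ys
  have "(\<Sum>ys\<in>?Dev. Wn W n x ys) \<le> (\<Sum>ys\<in>?Dev. Wn W n x ys * B ys)"
  proof (rule sum_mono)
    fix ys assume "ys \<in> ?Dev"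
    then have "1 \<le> B ys" unfolding B_def D_def by (intro one_le_exp_weight_of_abs_gt t0) auto
    then show "Wn W n x ys \<le> Wn W n x ys * B ys"
      using mult_left_mono[OF _ Wn_nonneg[OF ch, of n x ys]] by fastforce
  qed
  also have "\<dots> \<le> (\<Sum>ys\<in>words n. Wn W n x ys * B ys)"
    using Wn_nonneg[OF ch] finite_words unfolding B_def by (intro sum_mono2) auto
  also have "\<dots> = exp (- t * A) * ((\<Sum>ys\<in>words n. Wn W n x ys * exp (t * D ys))
      + (\<Sum>ys\<in>words n. Wn W n x ys * exp ((- t) * D ys)))"
    unfolding B_def by (simp add: sum.distrib sum_distrib_left algebra_simps)
  also have "\<dots> \<le> exp (- t * A) * (exp (12 * t\<^sup>2 * L\<^sup>2) ^ n + exp (12 * (- t)\<^sup>2 * L\<^sup>2) ^ n)"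
    unfolding D_def using t0 t1
    by (intro mult_left_mono add_mono word_surprisal_mgf_le[OF ch L]) auto
  also have "\<dots> = 2 * exp (real n * (12 * t\<^sup>2 * L\<^sup>2) - t * A)"
    by (simp add: exp_of_nat_mult[symmetric] exp_add[symmetric] exp_diff exp_minus field_simps)
  also have "real n * (12 * t\<^sup>2 * L\<^sup>2) - t * A = - (A\<^sup>2) / (48 * real n * L\<^sup>2)"
    unfolding t_def using n L by (simp add: power2_eq_square field_simps)
  finally show ?thesis .
qed

lemma typical_subset_words: "typical W n \<delta> x \<subseteq> words n"
  unfolding typical_def by auto

lemma typical_eq_word_surprisal:
  assumes ch: "channel W"
  shows "typical W n \<delta> x = {ys\<in>words n. Wn W n x ys > 0 \<and>
    \<bar>word_surprisal W n x ys - word_entropy W n x\<bar> \<le> \<delta> * sqrt (real n) * ln 2}"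
proof -
  have "log 2 (Wn W n x ys) + Hn W n x = - (word_surprisal W n x ys - word_entropy W n x) / ln 2"
    if "Wn W n x ys > 0" for ys
    using ln_Wn[OF ch that] Hn_eq_word_entropy[OF ch] by (simp add: log_def field_simps)
  then show ?thesis unfolding typical_def by (auto simp: pos_divide_le_eq)
qed

lemma WP_typical_ge_chernoff:
  fixes W :: "'x \<Rightarrow> 'y::finite \<Rightarrow> real"
  assumes ch: "channel W" and L: "1 \<le> L" "ln (real (card (UNIV :: 'y set))) \<le> L"
    and A: "A = \<delta> * sqrt (real n) * ln 2" "0 < A" "A \<le> real n * L"
  shows "1 - 2 * exp (- (A\<^sup>2) / (48 * real n * L\<^sup>2)) \<le> WP W n x (typical W n \<delta> x)"
proof -
  let ?Dev = "{ys\<in>words n. A < \<bar>word_surprisal W n x ys - word_entropy W n x\<bar>}"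
  have "1 - WP W n x (typical W n \<delta> x) = (\<Sum>ys\<in>words n - typical W n \<delta> x. Wn W n x ys)"
    using WP_eq_1_minus_compl[OF ch typical_subset_words[of W n \<delta> x], where x = x] by simp
  also have "\<dots> = (\<Sum>ys\<in>(words n - typical W n \<delta> x) \<inter> ?Dev. Wn W n x ys)"
    using Wn_nonneg[OF ch, of n x] finite_words
    by (intro sum.mono_neutral_right) (auto simp: typical_eq_word_surprisal[OF ch] A(1) order_le_less)
  also have "\<dots> \<le> (\<Sum>ys\<in>?Dev. Wn W n x ys)"
    using Wn_nonneg[OF ch] finite_words[of n] by (intro sum_mono2) auto
  also have "\<dots> \<le> 2 * exp (- (A\<^sup>2) / (48 * real n * L\<^sup>2))"
    by (rule word_surprisal_tail_le[OF ch L A(2,3)])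
  finally show ?thesis by simp
qed

lemma one_le_ln_max_3: "1 \<le> ln (max (d::real) 3)"
proof -
  have "ln (exp 1) \<le> ln (max d 3)" using exp_le by (subst ln_le_cancel_iff) auto
  then show ?thesis by simp
qed

text \<open>With L = ln max d 3 we have K d = (L / ln 2)^2, so the claim reduces to ln 2 \<le> 3/4.\<close>

lemma chernoff_exponent_le_K:
  fixes \<delta> d :: real
  assumes "0 < n"
  shows "exp (- ((\<delta> * sqrt (real n) * ln 2)\<^sup>2) / (48 * real n * (ln (max d 3))\<^sup>2))
    \<le> 2 powr (- (\<delta> ^ 2) / (36 * K d))"
proof -
  define L where "L = ln (max d 3)"
  have L: "1 \<le> L" unfolding L_def by (rule one_le_ln_max_3)
  have ln2: "ln 2 \<le> (3/4::real)"
    using ln_le_cancel_iff[of 2 "exp (3/4)"] exp_lower_Taylor_quadratic[of "3/4::real"]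
    by (simp add: power2_eq_square)
  define Q where "Q = \<delta>\<^sup>2 * (ln 2)\<^sup>2 / L\<^sup>2"
  have lhs: "- ((\<delta> * sqrt (real n) * ln 2)\<^sup>2) / (48 * real n * L\<^sup>2) = - Q / 48"
    unfolding Q_def using assms L by (simp add: power_mult_distrib field_simps)
  have rhs: "2 powr (- (\<delta> ^ 2) / (36 * K d)) = exp (- (Q * ln 2 / 36))"
    unfolding Q_def K_def powr_def log_def L_def[symmetric] using L
    by (simp add: power_divide field_simps power2_eq_square)
  have "Q * ln 2 / 36 \<le> Q / 48"
    using mult_left_mono[OF ln2, of Q] unfolding Q_def by simp
  then show ?thesis unfolding L_def[symmetric] lhs rhs by simp
qed

lemma WP_typical_ge:
  fixes W :: "'x \<Rightarrow> 'y::finite \<Rightarrow> real"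
  assumes ch: "channel W" and \<delta>: "0 < \<delta>" "\<delta> \<le> sqrt (real n) * log 2 (real (card (UNIV :: 'y set)))"
  shows "1 - 2 * 2 powr (- (\<delta> ^ 2) / (36 * K (real (card (UNIV :: 'y set)))))
    \<le> WP W n x (typical W n \<delta> x)"
proof -
  define d where "d = real (card (UNIV :: 'y set))"
  define L where "L = ln (max d 3)"
  have d1: "d \<ge> 1" unfolding d_def by (simp add: Suc_le_eq card_gt_0_iff)
  have sn: "sqrt (real n) > 0" using \<delta> by (cases "n = 0") auto
  have L1: "1 \<le> L" unfolding L_def by (rule one_le_ln_max_3)
  have dL: "ln d \<le> L" using d1 unfolding L_def by (subst ln_le_cancel_iff) auto
  have "\<delta> * sqrt (real n) * ln 2 \<le> sqrt (real n) * log 2 d * sqrt (real n) * ln 2"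
    unfolding d_def using \<delta> sn by (intro mult_right_mono) auto
  also have "\<dots> = real n * ln d" using sn by (simp add: log_def)
  also have "\<dots> \<le> real n * L" using dL by (intro mult_left_mono) auto
  finally have "1 - 2 * exp (- ((\<delta> * sqrt (real n) * ln 2)\<^sup>2) / (48 * real n * L\<^sup>2))
      \<le> WP W n x (typical W n \<delta> x)"
    using \<delta> sn dL unfolding d_def by (intro WP_typical_ge_chernoff[OF ch L1]) auto
  moreover have "exp (- ((\<delta> * sqrt (real n) * ln 2)\<^sup>2) / (48 * real n * L\<^sup>2))
      \<le> 2 powr (- (\<delta> ^ 2) / (36 * K d))"
    unfolding L_def using sn by (intro chernoff_exponent_le_K) simp
  ultimately show ?thesis unfolding d_def by simp
qed

section \<open>Typical sets of distinguishable codewords\<close>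

lemma sum_min_Wn_eq:
  assumes "channel W"
  shows "(\<Sum>ys\<in>words n. min (Wn W n x ys) (Wn W n x' ys)) = 1 - L1n W n x x' / 2"
proof -
  have "(\<Sum>ys\<in>words n. min (Wn W n x ys) (Wn W n x' ys))
     = (\<Sum>ys\<in>words n. (Wn W n x ys + Wn W n x' ys - \<bar>Wn W n x ys - Wn W n x' ys\<bar>) / 2)"
    by (intro sum.cong) (auto simp: min_def)
  also have "\<dots> = ((\<Sum>ys\<in>words n. Wn W n x ys) + (\<Sum>ys\<in>words n. Wn W n x' ys) - L1n W n x x') / 2"
    unfolding L1n_def sum_divide_distrib[symmetric] by (simp add: sum.distrib sum_subtractf)
  finally show ?thesis using sum_Wn_eq_1[OF assms] by simp
qed

lemma Wn_le_powr_on_typical: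
  assumes "ys \<in> typical W n \<delta> x" "ys \<in> typical W n \<delta> x'" "Hn W n x' - Hn W n x \<le> 1"
  shows "Wn W n x ys \<le> 2 powr (1 + 2 * (\<delta> * sqrt (real n))) * Wn W n x' ys"
proof -
  have P: "Wn W n x ys > 0" "\<bar>log 2 (Wn W n x ys) + Hn W n x\<bar> \<le> \<delta> * sqrt (real n)"
   and P': "Wn W n x' ys > 0" "\<bar>log 2 (Wn W n x' ys) + Hn W n x'\<bar> \<le> \<delta> * sqrt (real n)"
    using assms(1,2) unfolding typical_def by auto
  have "log 2 (Wn W n x ys) \<le> (1 + 2 * (\<delta> * sqrt (real n))) + log 2 (Wn W n x' ys)"
    using P P' assms(3) by linarith
  then have "2 powr log 2 (Wn W n x ys) \<le> 2 powr ((1 + 2 * (\<delta> * sqrt (real n))) + log 2 (Wn W n x' ys))"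
    by (rule powr_mono) simp
  then show ?thesis using P P' by (simp add: powr_add)
qed

lemma WP_typical_cross_le:
  assumes ch: "channel W" and a: "a = \<delta> * sqrt (real n)" "0 \<le> a"
    and H: "Hn W n x' - Hn W n x \<le> 1"
    and L: "1 - L1n W n x x' / 2 \<le> 2 powr (- 3 * a)"
  shows "WP W n x (typical W n \<delta> x') \<le> (1 - WP W n x (typical W n \<delta> x)) + 2 * 2 powr (- a)"
proof -
  define T where "T = typical W n \<delta> x"
  define T' where "T' = typical W n \<delta> x'"
  define c :: real where "c = 2 powr (1 + 2 * a)"
  have c1: "c \<ge> 1" unfolding c_def using a by (intro ge_one_powr_ge_zero) auto
  have TT: "T \<subseteq> words n" "T' \<subseteq> words n" unfolding T_def T'_def by (fact typical_subset_words)+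
  have ratio: "Wn W n x ys \<le> c * min (Wn W n x ys) (Wn W n x' ys)" if "ys \<in> T' \<inter> T" for ys
  proof -
    have "Wn W n x ys \<le> c * Wn W n x' ys"
      using Wn_le_powr_on_typical[of ys W n \<delta> x x'] that H unfolding T_def T'_def c_def a(1) by auto
    moreover have "Wn W n x ys \<le> c * Wn W n x ys"
      using c1 Wn_nonneg[OF ch, of n x ys] mult_right_mono[of 1 c "Wn W n x ys"] by simp
    ultimately show ?thesis by (simp add: min_def)
  qed
  have "WP W n x T' = (\<Sum>ys\<in>T'. Wn W n x ys)"
    unfolding WP_def using TT by (simp add: Int_absorb2)
  also have "\<dots> = (\<Sum>ys\<in>T' \<inter> T. Wn W n x ys) + (\<Sum>ys\<in>T' - T. Wn W n x ys)"
    using finite_subset[OF TT(2) finite_words] by (rule sum.Int_Diff)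
  also have "(\<Sum>ys\<in>T' - T. Wn W n x ys) \<le> (\<Sum>ys\<in>words n - T. Wn W n x ys)"
    using TT finite_words Wn_nonneg[OF ch] by (intro sum_mono2) auto
  also have "\<dots> = 1 - WP W n x T" using WP_eq_1_minus_compl[OF ch TT(1)] by simp
  also have "(\<Sum>ys\<in>T' \<inter> T. Wn W n x ys) \<le> (\<Sum>ys\<in>T' \<inter> T. c * min (Wn W n x ys) (Wn W n x' ys))"
    by (intro sum_mono ratio)
  also have "\<dots> \<le> (\<Sum>ys\<in>words n. c * min (Wn W n x ys) (Wn W n x' ys))"
    using TT finite_words Wn_nonneg[OF ch] c1 by (intro sum_mono2) auto
  also have "\<dots> = c * (1 - L1n W n x x' / 2)"
    using sum_min_Wn_eq[OF ch] by (simp add: sum_distrib_left[symmetric])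
  also have "\<dots> \<le> c * 2 powr (- 3 * a)" using L c1 by (intro mult_left_mono) auto
  also have "\<dots> = 2 * 2 powr (- a)"
    unfolding c_def powr_add[symmetric] using powr_add[of 2 1 "- a"] by simp
  finally show ?thesis unfolding T_def T'_def by linarith
qed

lemma WP_typical_other_le:
  fixes W :: "'x \<Rightarrow> 'y::finite \<Rightarrow> real"
  assumes ch: "channel W" and \<delta>: "0 < \<delta>" "\<delta> \<le> sqrt (real n) * log 2 (real (card (UNIV :: 'y set)))"
    and H: "Hn W n x' - Hn W n x \<le> 1"
    and L: "1 - L1n W n x x' / 2 \<le> 2 powr (- 3 * \<delta> * sqrt (real n))"
  shows "WP W n x (typical W n \<delta> x')
    \<le> 2 * 2 powr (- (\<delta> ^ 2) / (36 * K (real (card (UNIV :: 'y set))))) + 3 * 2 powr (- \<delta> * sqrt (real n))"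
proof -
  have "WP W n x (typical W n \<delta> x')
      \<le> (1 - WP W n x (typical W n \<delta> x)) + 2 * 2 powr (- (\<delta> * sqrt (real n)))"
    using \<delta>(1) H L by (intro WP_typical_cross_le[OF ch refl]) (auto simp: mult.assoc)
  moreover have "2 powr (- \<delta> * sqrt (real n)) = 2 powr (- (\<delta> * sqrt (real n)))" by simp
  moreover have "0 \<le> 2 powr (- (\<delta> * sqrt (real n)))" by simp
  ultimately show ?thesis using WP_typical_ge[OF ch \<delta>, of x] by linarith
qed

section \<open>Selecting codewords of similar entropy\<close>

lemma exists_large_fiber:
  assumes "finite A" "0 < M" "g ` A \<subseteq> {..<M}"
  shows "\<exists>b<M. real (card A) / real M \<le> real (card {j\<in>A. g j = b})"
proof (rule ccontr)
  assume "\<not> ?thesis"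
  then have small: "real (card {j\<in>A. g j = b}) < real (card A) / real M" if "b < M" for b
    using that by force
  have "card A = (\<Sum>b<M. card {j\<in>A. g j = b})"
    using assms card_eq_sum sum.group[of A "{..<M}" g "\<lambda>_. 1::nat"] by auto
  then have "real (card A) = (\<Sum>b<M. real (card {j\<in>A. g j = b}))" by simp
  also have "\<dots> < (\<Sum>b<M. real (card A) / real M)"
    using assms(2) small by (intro sum_strict_mono) auto
  also have "\<dots> = real (card A)" using assms(2) by simp
  finally show False by simp
qed

lemma exists_large_subset_small_spread:
  fixes f :: "'a \<Rightarrow> real" and M :: nat
  assumes "finite A" "1 \<le> M" "\<And>j. j \<in> A \<Longrightarrow> 0 \<le> f j \<and> f j \<le> real M"
  shows "\<exists>C\<subseteq>A. real (card A) / real M \<le> real (card C) \<and> (\<forall>j\<in>C. \<forall>k\<in>C. f k - f j \<le> 1)"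
proof -
  \<comment> \<open>unit buckets [b, b + 1), except that the value M joins the last bucket\<close>
  define g where "g j = min (nat \<lfloor>f j\<rfloor>) (M - 1)" for j
  have g: "g j < M \<and> real (g j) \<le> f j \<and> f j \<le> real (g j) + 1" if "j \<in> A" for j
  proof (cases "nat \<lfloor>f j\<rfloor> \<le> M - 1")
    case True
    then show ?thesis using assms(2) assms(3)[OF that] unfolding g_def by linarith
  next
    case False
    then have "int M \<le> \<lfloor>f j\<rfloor>" by linarith
    then have "real M \<le> f j" by (simp add: le_floor_iff)
    then show ?thesis using False assms(2) assms(3)[OF that] unfolding g_def by (simp add: of_nat_diff)
  qed
  obtain b where "real (card A) / real M \<le> real (card {j\<in>A. g j = b})"
    using exists_large_fiber[of A M g] assms(1,2) g by auto
  moreover have "f k - f j \<le> 1" if "j \<in> {j\<in>A. g j = b}" "k \<in> {j\<in>A. g j = b}" for j k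
  proof -
    have "j \<in> A" "k \<in> A" "real (g j) = real (g k)" using that by auto
    then show ?thesis using g[of j] g[of k] by linarith
  qed
  ultimately show ?thesis by (intro exI[of _ "{j\<in>A. g j = b}"]) auto
qed

lemma exists_codewords_entropy_spread_le_1:
  fixes W :: "'x \<Rightarrow> 'y::finite \<Rightarrow> real" and u :: "'i \<Rightarrow> nat \<Rightarrow> 'x"
  assumes ch: "channel W" and I: "finite I"
    and pos: "0 < real n * log 2 (real (card (UNIV :: 'y set)))"
  shows "\<exists>C\<subseteq>I. real (card I) / real_of_int \<lceil>real n * log 2 (real (card (UNIV :: 'y set)))\<rceil>
      \<le> real (card C) \<and> (\<forall>j\<in>C. \<forall>k\<in>C. Hn W n (u k) - Hn W n (u j) \<le> 1)"
proof -
  define M where "M = nat \<lceil>real n * log 2 (real (card (UNIV :: 'y set)))\<rceil>"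
  have M: "1 \<le> M" "real M = real_of_int \<lceil>real n * log 2 (real (card (UNIV :: 'y set)))\<rceil>"
    using pos unfolding M_def by (auto simp: Suc_le_eq)
  have "0 \<le> Hn W n (u j) \<and> Hn W n (u j) \<le> real M" for j
    using Hn_nonneg[OF ch, of n "u j"] Hn_le[OF ch, of n "u j"]
      le_of_int_ceiling[of "real n * log 2 (real (card (UNIV :: 'y set)))"]
    unfolding M(2) by linarith
  then show ?thesis
    using exists_large_subset_small_spread[OF I M(1), of "\<lambda>j. Hn W n (u j)"] unfolding M(2) by blast
qed

theorem theorem3:
  fixes W :: "'x \<Rightarrow> 'y::finite \<Rightarrow> real"
    and n N :: nat and \<delta> :: real and u :: "nat \<Rightarrow> nat \<Rightarrow> 'x"
  assumes "channel W"
    and "0 < \<delta>" and "\<delta> \<le> sqrt (real n) * log 2 (real (card (UNIV :: 'y set)))"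
    and "\<forall>j\<in>{1..N}. \<forall>k\<in>{1..N}. j \<noteq> k \<longrightarrow>
           1 - L1n W n (u j) (u k) / 2 \<le> 2 powr (- 3 * \<delta> * sqrt (real n))"
  shows "\<exists>C \<subseteq> {1..N}.
     real (card C) \<ge> real N / real_of_int \<lceil>real n * log 2 (real (card (UNIV :: 'y set)))\<rceil> \<and>
     DI_code W n C u (\<lambda>j. typical W n \<delta> (u j))
       (2 * 2 powr (- (\<delta> ^ 2) / (36 * K (real (card (UNIV :: 'y set))))))
       (2 * 2 powr (- (\<delta> ^ 2) / (36 * K (real (card (UNIV :: 'y set))))) + 3 * 2 powr (- \<delta> * sqrt (real n)))"
proof -
  have "0 < sqrt (real n) * log 2 (real (card (UNIV :: 'y set)))" using assms(2,3) by linarith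
  then have pos: "0 < real n * log 2 (real (card (UNIV :: 'y set)))" by (simp add: zero_less_mult_iff)
  obtain C where C: "C \<subseteq> {1..N}"
      "real (card {1..N}) / real_of_int \<lceil>real n * log 2 (real (card (UNIV :: 'y set)))\<rceil> \<le> real (card C)"
    and spread: "\<forall>j\<in>C. \<forall>k\<in>C. Hn W n (u k) - Hn W n (u j) \<le> 1"
    using exists_codewords_entropy_spread_le_1[OF assms(1) finite_atLeastAtMost[of 1 N] pos, of u] by blast
  have "DI_code W n C u (\<lambda>j. typical W n \<delta> (u j))
       (2 * 2 powr (- (\<delta> ^ 2) / (36 * K (real (card (UNIV :: 'y set))))))
       (2 * 2 powr (- (\<delta> ^ 2) / (36 * K (real (card (UNIV :: 'y set))))) + 3 * 2 powr (- \<delta> * sqrt (real n)))"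
    unfolding DI_code_def
  proof (intro conjI ballI impI)
    fix j
    show "typical W n \<delta> (u j) \<subseteq> words n" by (rule typical_subset_words)
    show "1 - 2 * 2 powr (- (\<delta> ^ 2) / (36 * K (real (card (UNIV :: 'y set)))))
        \<le> WP W n (u j) (typical W n \<delta> (u j))"
      by (rule WP_typical_ge[OF assms(1-3)])
  next
    fix j k assume jk: "j \<in> C" "k \<in> C" "j \<noteq> k"
    then have "j \<in> {1..N}" "k \<in> {1..N}" using C(1) by auto
    then show "WP W n (u j) (typical W n \<delta> (u k))
        \<le> 2 * 2 powr (- (\<delta> ^ 2) / (36 * K (real (card (UNIV :: 'y set))))) + 3 * 2 powr (- \<delta> * sqrt (real n))"
      using jk spread assms(4) by (intro WP_typical_other_le[OF assms(1-3)]) auto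
  qed
  with C show ?thesis by auto
qed

end
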